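(* Let $\mathcal{A}=\{d,u\}$. Consider the double comb context tree on $\mathcal{A}$, whose contexts are the words $u^k d$ and $d^k u$ for $k\geq 1$, and for each context $c$ let $q_c$ be a probability measure on $\mathcal{A}$. Let $(U_n)_{n\geq 0}$ be the associated variable length Markov chain (VLMC), started from a right-infinite word $U_0$ with $X_{-1}=u$, $X_0=d$, and for $n\geq 0$ let $X_n$ denote the first (leftmost) letter of $U_n$, so that $U_n=X_nX_{n-1}\cdots X_0X_{-1}\cdots$. Assume that for all $\alpha\neq\beta$ in $\mathcal{A}$, $\lim_{n\to\infty}\prod_{k=1}^{n}q_{\alpha^k\beta}(\alpha)=0$. Define the jump times $B_0=0$ and $B_{n+1}=\inf\{k>B_n : X_k\neq X_{k-1}\}$ for $n\geq 0$, the sojourn times $T_0=0$, $T_n=B_n-B_{n-1}$ for $n\geq 1$, and $J_n=X_{B_n}$ for $n\geq 0$. Then $(J_n,T_n)_{n\geq 0}$ is a Markov renewal chain with state space $\mathcal{A}\times\mathbb{N}$ whose semi-Markov kernel is given, for $\alpha\neq\beta$ in $\mathcal{A}$ and $k\geq 1$, by \[ p_{\alpha,\beta}(k)=\Big(\prod_{j=1}^{k-1}q_{\alpha^j\beta}(\alpha)\Big)\,q_{\alpha^k\beta}(\beta), \] (and $p_{\alpha,\alpha}(k)=0$, $p_{\alpha,\beta}(0)=0$), and the sequence of increments $(X_j)_{j\geq 0}$ is the $\mathcal{A}$-valued semi-Markov chain associated with $(J_n,T_n)_{n\geq0}$, i.e. $X_j=J_n$ whenever $B_n\leq j<B_{n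+1}$.
   Context: A VLMC defined by a context tree $\mathcal{T}$ (a saturated tree of finite words on $\mathcal{A}$ with at most countably many infinite branches; contexts are its leaves and infinite branches) and probability measures $(q_c)_c$ indexed by the contexts is the Markov chain $(U_n)$ on right-infinite words over $\mathcal{A}$ with transitions $\mathbb{P}(U_{n+1}=\alpha U_n\mid U_n)=q_{\mathrm{pref}(U_n)}(\alpha)$, where $\mathrm{pref}(w)$ is the unique context that is a prefix of $w$ (for the double comb, $\mathrm{pref}(w)=\alpha^k\beta$ when $w$ begins with exactly $k$ copies of $\alpha$ followed by $\beta\neq\alpha$). The walk $S_n=\sum_{\ell=1}^n X_\ell$ (with $d=-1$, $u=+1$) is the one-dimensional persistent random walk. A Markov chain $(J_n,T_n)_{n\geq0}$ on $E\times\mathbb{N}$ is a Markov renewal chain if $\mathbb{P}(J_{n+1}=b,T_{n+1}=k\mid J_n=a,T_n=j)=\mathbb{P}(J_{n+1}=b,T_{n+1}=k\mid J_n=a)=:p_{a,b}(k)$ for all $n,a,b,j,k$, with $p_{a,b}(0)=0$; the family $(p_{a,b}(k))$ is its semi-Markov kernel. If $T_0=0$ and $B_n=\sum_{i=0}^nT_i$, the associated semi-Markov chain is $(Z_j)_{j\geq0}$ with $Z_j=J_n$ for $B_n\leq j<B_{n+1}$. *)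

theory Defs
  imports "HOL-Probability.Probability"
begin

datatype letter = D | U

fun other :: "letter \<Rightarrow> letter" where
  "other D = U" | "other U = D"

text \<open>Context of U_n for the double comb, for a path w (w i = X_i, with X_{-1} = u, X_0 = d):
  the context is (w n)^k (other (w n)) where k = runlen w n is the length of the maximal run
  of the letter w n ending at position n (counting X_{-1} = u).  Since X_0 = d and X_{-1} = u,
  runlen w 0 = 1.\<close>
fun runlen :: "(nat \<Rightarrow> letter) \<Rightarrow> nat \<Rightarrow> nat" where
  "runlen w 0 = 1"
| "runlen w (Suc n) = (if w (Suc n) = w n then Suc (runlen w n) else 1)"

text \<open>Probability measures q_c, indexed by contexts c = a^k b (b = other a, k \<ge> 1):
  q a k is q_{a^k (other a)} (the index k = 0 is unused).
  The VLMC on the double comb started from U_0 with X_{-1} = u, X_0 = d, described through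
  the law of its increments: X_0 = d and
  P(X_0..X_{n+1} = w_0..w_{n+1}) = P(X_0..X_n = w_0..w_n) * q_{pref(U_n)}(w_{n+1}).\<close>
definition vlmc_double_comb ::
  "'w measure \<Rightarrow> (nat \<Rightarrow> 'w \<Rightarrow> letter) \<Rightarrow> (letter \<Rightarrow> nat \<Rightarrow> letter pmf) \<Rightarrow> bool" where
  "vlmc_double_comb M X q \<longleftrightarrow>
     prob_space M \<and>
     (\<forall>i. X i \<in> measurable M (count_space UNIV)) \<and>
     (\<forall>\<omega>\<in>space M. X 0 \<omega> = D) \<and>
     (\<forall>n w. measure M {\<omega>\<in>space M. \<forall>i\<le>Suc n. X i \<omega> = w i}
             = measure M {\<omega>\<in>space M. \<forall>i\<le>n. X i \<omega> = w i}
               * pmf (q (w n) (runlen w n)) (w (Suc n)))"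

primrec jumpB :: "(nat \<Rightarrow> letter) \<Rightarrow> nat \<Rightarrow> nat" where
  "jumpB x 0 = 0"
| "jumpB x (Suc n) = (LEAST k. k > jumpB x n \<and> x k \<noteq> x (k - 1))"

definition sojT :: "(nat \<Rightarrow> letter) \<Rightarrow> nat \<Rightarrow> nat" where
  "sojT x n = (if n = 0 then 0 else jumpB x n - jumpB x (n - 1))"

definition jumpJ :: "(nat \<Rightarrow> letter) \<Rightarrow> nat \<Rightarrow> letter" where
  "jumpJ x n = x (jumpB x n)"

definition markov_renewal_chain ::
  "'w measure \<Rightarrow> (nat \<Rightarrow> 'w \<Rightarrow> 'e) \<Rightarrow> (nat \<Rightarrow> 'w \<Rightarrow> nat) \<Rightarrow> ('e \<Rightarrow> 'e \<Rightarrow> nat \<Rightarrow> real) \<Rightarrow> bool" where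
  "markov_renewal_chain M J T p \<longleftrightarrow>
     (\<forall>a b. p a b 0 = 0) \<and>
     (\<forall>n js ts b k.
        measure M {\<omega>\<in>space M. (\<forall>i\<le>n. J i \<omega> = js i \<and> T i \<omega> = ts i) \<and> J (Suc n) \<omega> = b \<and> T (Suc n) \<omega> = k}
        = measure M {\<omega>\<in>space M. \<forall>i\<le>n. J i \<omega> = js i \<and> T i \<omega> = ts i} * p (js n) b k)"

definition semi_markov_chain_of ::
  "'w measure \<Rightarrow> (nat \<Rightarrow> 'w \<Rightarrow> 'e) \<Rightarrow> (nat \<Rightarrow> 'w \<Rightarrow> nat) \<Rightarrow> (nat \<Rightarrow> 'w \<Rightarrow> 'e) \<Rightarrow> bool" where
  "semi_markov_chain_of M J T Z \<longleftrightarrow>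
     (AE \<omega> in M. T 0 \<omega> = 0 \<and>
        (\<forall>n j. (\<Sum>i\<le>n. T i \<omega>) \<le> j \<and> j < (\<Sum>i\<le>Suc n. T i \<omega>) \<longrightarrow> Z j \<omega> = J n \<omega>))"

definition comb_kernel :: "(letter \<Rightarrow> nat \<Rightarrow> letter pmf) \<Rightarrow> letter \<Rightarrow> letter \<Rightarrow> nat \<Rightarrow> real" where
  "comb_kernel q a b k =
     (if a \<noteq> b \<and> k \<ge> 1 then (\<Prod>j\<in>{1..k-1}. pmf (q a j) a) * pmf (q a k) b else 0)"

end

theory Submission
  imports Defs
begin

text \<open>
  A run of the letter a that starts at time s (run length 1 there) survives L further
  steps with probability q(a,1)(a) \<sqdot> \<dots> \<sqdot> q(a,L)(a), which tends to 0 by hypothesis.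
  A path without jumps after time m contains, for every L, such a run starting at one
  of the times s \<le> m, so almost surely there are infinitely many jumps.

  On paths with infinitely many jumps, (J_i, T_i) for i \<le> n is a function of the prefix
  X_0 \<dots> X_(B_n), and the run length at time B_n is 1. So the event
  {(J_i, T_i) = (j_i, t_i) for i \<le> n} agrees almost surely with an event on that prefix,
  and the next jump comes after k steps and leads to b exactly when the path continues
  with k - 1 letters a and then b. Applying the defining recursion of the VLMC letter by
  letter, with run lengths 1, \<dots>, k, multiplies the probability by p_(a,b)(k).
  The semi-Markov property says that the path is constant between jumps.
\<close>

section \<open>Runs and jumps of a path\<close>

lemma UNIV_letter: "(UNIV :: letter set) = {D, U}"
  using letter.exhaust by auto

instance letter :: finite
  by standard (simp add: UNIV_letter)

declare jumpB.simps(2) [simp del]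

definition infinite_jumps :: "(nat \<Rightarrow> letter) \<Rightarrow> bool" where
  "infinite_jumps x \<longleftrightarrow> (\<forall>m. \<exists>k>m. x k \<noteq> x (k - 1))"

lemma runlen_cong: "\<forall>i\<le>n. x i = y i \<Longrightarrow> runlen x n = runlen y n"
  by (induction n) auto

lemma runlen_add: "\<forall>i\<in>{m..m + j}. x i = a \<Longrightarrow> runlen x (m + j) = runlen x m + j"
proof (induction j)
  case (Suc j)
  have "runlen x (m + j) = runlen x m + j"
    using Suc.prems by (intro Suc.IH) auto
  moreover have "x (Suc (m + j)) = x (m + j)"
    using Suc.prems by simp
  ultimately show ?case by simp
qed simp

lemma runlen_run_extension:
  assumes "w m = a" "runlen w m = r" "\<forall>i\<in>{m<..m + j}. w i = a"
  shows "w (m + j) = a \<and> runlen w (m + j) = r + j"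
proof -
  have "\<forall>i\<in>{m..m + j}. w i = a"
    using assms(1,3) by (metis atLeastAtMost_iff greaterThanAtMost_iff le_neq_implies_less)
  then show ?thesis
    using runlen_add[of m j w a] assms(2) by simp
qed

lemma run_start: "\<exists>s\<le>n. runlen x s = 1 \<and> (\<forall>i\<in>{s..n}. x i = x n)"
proof (induction n)
  case (Suc n)
  show ?case
  proof (cases "x (Suc n) = x n")
    case True
    with Suc.IH show ?thesis by (metis atLeastAtMost_iff le_Suc_eq)
  next
    case False
    then show ?thesis by (intro exI[of _ "Suc n"]) simp
  qed
qed simp

lemma run_start_of_constant_tail:
  assumes "\<forall>k>m. x k = x (k - 1)"
  obtains s a where "s \<le> m" "runlen x s = 1" "\<forall>i\<ge>s. x i = a"
proof -
  obtain s where s: "s \<le> m" "runlen x s = 1" "\<forall>i\<in>{s..m}. x i = x m"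
    using run_start by blast
  have "x i = x m" if "m \<le> i" for i
    using that
  proof (induction i rule: dec_induct)
    case (step i)
    then show ?case using assms by (metis diff_Suc_1 le_imp_less_Suc)
  qed (rule refl)
  with s have "\<forall>i\<ge>s. x i = x m"
    by (metis atLeastAtMost_iff nat_le_linear)
  with s show thesis by (intro that)
qed

lemma
  assumes "infinite_jumps x"
  shows jumpB_less_Suc: "jumpB x n < jumpB x (Suc n)"
    and jump_at_jumpB_Suc: "x (jumpB x (Suc n)) \<noteq> x (jumpB x (Suc n) - 1)"
    and no_jump_before_jumpB_Suc: "\<lbrakk>jumpB x n < j; j < jumpB x (Suc n)\<rbrakk> \<Longrightarrow> x j = x (j - 1)"
proof -
  let ?P = "\<lambda>k. k > jumpB x n \<and> x k \<noteq> x (k - 1)"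
  obtain k where "?P k" using assms unfolding infinite_jumps_def by blast
  then have "?P (Least ?P)" by (rule LeastI)
  then show "jumpB x n < jumpB x (Suc n)" "x (jumpB x (Suc n)) \<noteq> x (jumpB x (Suc n) - 1)"
    by (simp_all add: jumpB.simps(2))
  show "x j = x (j - 1)" if "jumpB x n < j" "j < jumpB x (Suc n)"
    using that not_less_Least[of j ?P] by (auto simp: jumpB.simps(2))
qed

lemma jumpB_Suc_eqI:
  assumes "jumpB x n < t" "x t \<noteq> x (t - 1)"
    and "\<And>j. \<lbrakk>jumpB x n < j; j < t\<rbrakk> \<Longrightarrow> x j = x (j - 1)"
  shows "jumpB x (Suc n) = t"
  unfolding jumpB.simps(2)
proof (rule Least_equality)
  show "jumpB x n < t \<and> x t \<noteq> x (t - 1)" using assms(1,2) by simp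
  show "t \<le> k" if "jumpB x n < k \<and> x k \<noteq> x (k - 1)" for k
    using that assms(3) by (meson not_le)
qed

lemma constant_between_jumps:
  assumes "infinite_jumps x" "jumpB x n \<le> j" "j < jumpB x (Suc n)"
  shows "x j = jumpJ x n"
  using assms(2,3) unfolding jumpJ_def
proof (induction j rule: dec_induct)
  case (step j)
  then show ?case using no_jump_before_jumpB_Suc[OF assms(1), of n "Suc j"] by simp
qed simp

lemma sum_sojT_eq_jumpB:
  assumes "infinite_jumps x"
  shows "(\<Sum>i\<le>n. sojT x i) = jumpB x n"
  by (induction n) (simp_all add: sojT_def less_imp_le[OF jumpB_less_Suc[OF assms]])

lemma sojT_0 [simp]: "sojT x 0 = 0"
  by (simp add: sojT_def)

lemma sojT_Suc_pos: "infinite_jumps x \<Longrightarrow> sojT x (Suc n) > 0"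
  by (simp add: sojT_def jumpB_less_Suc)

lemma runlen_jumpB:
  assumes "infinite_jumps x"
  shows "runlen x (jumpB x n) = 1"
proof (cases n)
  case (Suc m)
  then obtain j where j: "jumpB x n = Suc j"
    using jumpB_less_Suc[OF assms, of m] by (metis less_nat_zero_code not0_implies_Suc)
  then have "x (Suc j) \<noteq> x j" using jump_at_jumpB_Suc[OF assms, of m] Suc by simp
  then show ?thesis by (simp add: j)
qed simp

lemma jumpB_prefix_cong:
  assumes x: "infinite_jumps x" and xy: "\<forall>i\<le>m. x i = y i" and le: "jumpB x n \<le> m"
  shows "jumpB y n = jumpB x n"
  using le
proof (induction n)
  case (Suc n)
  have IH: "jumpB y n = jumpB x n"
    using Suc.prems jumpB_less_Suc[OF x, of n] by (intro Suc.IH) linarith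
  show ?case
  proof (rule jumpB_Suc_eqI)
    show "jumpB y n < jumpB x (Suc n)"
      unfolding IH by (rule jumpB_less_Suc[OF x])
    have "x (jumpB x (Suc n)) \<noteq> x (jumpB x (Suc n) - 1)"
      by (rule jump_at_jumpB_Suc[OF x])
    then show "y (jumpB x (Suc n)) \<noteq> y (jumpB x (Suc n) - 1)"
      using xy Suc.prems by (metis diff_le_self order_trans)
    fix j assume "jumpB y n < j" "j < jumpB x (Suc n)"
    then have "x j = x (j - 1)" "j \<le> m"
      using no_jump_before_jumpB_Suc[OF x, of n j] IH Suc.prems by simp_all
    then show "y j = y (j - 1)" using xy by (metis diff_le_self order_trans)
  qed
qed simp

section \<open>Events determined by a finite prefix\<close>

definition depends_on_prefix :: "nat \<Rightarrow> ((nat \<Rightarrow> letter) \<Rightarrow> bool) \<Rightarrow> bool" where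
  "depends_on_prefix m E \<longleftrightarrow> (\<forall>x y. (\<forall>i\<le>m. x i = y i) \<longrightarrow> E x = E y)"

lemma depends_on_prefix_end_state: "depends_on_prefix m (\<lambda>x. x m = a \<and> runlen x m = r)"
  unfolding depends_on_prefix_def by (metis order_refl runlen_cong)

lemma depends_on_prefix_Suc:
  "depends_on_prefix m E \<Longrightarrow> depends_on_prefix (Suc m) (\<lambda>x. E x \<and> x (Suc m) = c)"
  unfolding depends_on_prefix_def by (metis le_SucI order_refl)

lemma depends_on_prefix_run:
  "depends_on_prefix m E \<Longrightarrow> depends_on_prefix (m + j) (\<lambda>x. E x \<and> (\<forall>i\<in>{m<..m + j}. x i = a))"
  unfolding depends_on_prefix_def by (metis greaterThanAtMost_iff le_add1 order_trans)

definition jump_record :: "nat \<Rightarrow> (nat \<Rightarrow> letter) \<Rightarrow> (nat \<Rightarrow> nat) \<Rightarrow> (nat \<Rightarrow> letter) \<Rightarrow> bool" where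
  "jump_record n js ts x \<longleftrightarrow> (\<forall>i\<le>n. jumpJ x i = js i \<and> sojT x i = ts i)"

lemma jumpB_eq_sum_if_jump_record:
  assumes "infinite_jumps x" "jump_record n js ts x" "i \<le> n"
  shows "jumpB x i = (\<Sum>l\<le>i. ts l)"
proof -
  have "sojT x l = ts l" if "l \<le> i" for l
    using assms(2,3) that unfolding jump_record_def by simp
  then show ?thesis using sum_sojT_eq_jumpB[OF assms(1), of i] by simp
qed

lemma jump_record_prefix_cong:
  assumes x: "infinite_jumps x" and rec: "jump_record n js ts x"
    and xy: "\<forall>i\<le>(\<Sum>l\<le>n. ts l). x i = y i"
  shows "jump_record n js ts y"
proof -
  have le: "jumpB x i \<le> (\<Sum>l\<le>n. ts l)" if "i \<le> n" for i
    using jumpB_eq_sum_if_jump_record[OF x rec that] that by (simp add: sum_mono2)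
  have eq: "jumpB y i = jumpB x i" if "i \<le> n" for i
    by (rule jumpB_prefix_cong[OF x xy le[OF that]])
  show ?thesis
    unfolding jump_record_def
  proof (intro allI impI)
    fix i assume i: "i \<le> n"
    have "sojT y i = sojT x i"
      using eq[OF i] eq[of "i - 1"] i unfolding sojT_def by auto
    moreover have "jumpJ y i = jumpJ x i"
      using eq[OF i] le[OF i] xy unfolding jumpJ_def by auto
    ultimately show "jumpJ y i = js i \<and> sojT y i = ts i"
      using rec i unfolding jump_record_def by auto
  qed
qed

text \<open>Any tail with infinitely many jumps would do here: on such paths the jump
  record is determined by the prefix up to time \<open>B\<^sub>n\<close>, so continuing that prefix
  this way turns the record into an event on the prefix alone.\<close>

definition alternating_after :: "nat \<Rightarrow> (nat \<Rightarrow> letter) \<Rightarrow> nat \<Rightarrow> letter" where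
  "alternating_after m x i = (if i \<le> m then x i else if even i then D else U)"

lemma infinite_jumps_alternating_after: "infinite_jumps (alternating_after m x)"
  unfolding infinite_jumps_def
proof
  fix k
  show "\<exists>k'>k. alternating_after m x k' \<noteq> alternating_after m x (k' - 1)"
    by (rule exI[of _ "k + m + 2"]) (auto simp: alternating_after_def)
qed

lemma jump_record_prefix_event:
  fixes n :: nat and js :: "nat \<Rightarrow> letter" and ts :: "nat \<Rightarrow> nat"
  defines "S \<equiv> \<Sum>l\<le>n. ts l"
  obtains E where "depends_on_prefix S E"
    and "\<And>x. infinite_jumps x \<Longrightarrow> jump_record n js ts x \<longleftrightarrow> E x"
    and "\<And>w. E w \<Longrightarrow> w S = js n \<and> runlen w S = 1"
proof
  let ?y = "alternating_after S"
  have agree: "\<forall>i\<le>S. ?y x i = x i" for x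
    by (simp add: alternating_after_def)
  show "depends_on_prefix S (\<lambda>x. jump_record n js ts (?y x))"
    unfolding depends_on_prefix_def
  proof (intro allI impI)
    fix x y :: "nat \<Rightarrow> letter" assume "\<forall>i\<le>S. x i = y i"
    then have "?y x = ?y y" by (auto simp: alternating_after_def)
    then show "jump_record n js ts (?y x) = jump_record n js ts (?y y)" by simp
  qed
  show "jump_record n js ts x \<longleftrightarrow> jump_record n js ts (?y x)" if x: "infinite_jumps x" for x
    using jump_record_prefix_cong[OF x, of n js ts "?y x"]
      jump_record_prefix_cong[OF infinite_jumps_alternating_after, of n js ts S x x] agree[of x]
    unfolding S_def by auto
  fix w assume rec: "jump_record n js ts (?y w)"
  have B: "jumpB (?y w) n = S"
    using jumpB_eq_sum_if_jump_record[OF infinite_jumps_alternating_after rec] unfolding S_def by simp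
  have "?y w S = js n"
    using rec B unfolding jump_record_def jumpJ_def by auto
  moreover have "runlen (?y w) S = 1"
    using runlen_jumpB[OF infinite_jumps_alternating_after, of S w n] B by simp
  moreover have "runlen w S = runlen (?y w) S"
    using agree[of w] by (intro runlen_cong) simp
  ultimately show "w S = js n \<and> runlen w S = 1"
    using agree[of w] by simp
qed

lemma next_jump_iff:
  assumes x: "infinite_jumps x" and rec: "jump_record n js ts x" and S: "S = (\<Sum>l\<le>n. ts l)"
  shows "jumpJ x (Suc n) = b \<and> sojT x (Suc n) = Suc j \<longleftrightarrow>
    b \<noteq> js n \<and> (\<forall>i\<in>{S<..S + j}. x i = js n) \<and> x (Suc (S + j)) = b"
proof -
  have BS: "jumpB x n = S"
    using jumpB_eq_sum_if_jump_record[OF x rec] S by simp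
  have xS: "x S = js n"
    using rec BS unfolding jump_record_def jumpJ_def by auto
  show ?thesis
  proof
    assume next_jump: "jumpJ x (Suc n) = b \<and> sojT x (Suc n) = Suc j"
    have B: "jumpB x (Suc n) = Suc (S + j)"
      using next_jump BS jumpB_less_Suc[OF x, of n] unfolding sojT_def by auto
    have run: "x i = js n" if "i \<in> {S..S + j}" for i
      using constant_between_jumps[OF x, of n i] that BS B rec unfolding jump_record_def by simp
    have "x (Suc (S + j)) = b"
      using next_jump B unfolding jumpJ_def by simp
    moreover have "x (Suc (S + j)) \<noteq> x (S + j)"
      using jump_at_jumpB_Suc[OF x, of n] B by simp
    ultimately show "b \<noteq> js n \<and> (\<forall>i\<in>{S<..S + j}. x i = js n) \<and> x (Suc (S + j)) = b"
      using run by auto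
  next
    assume h: "b \<noteq> js n \<and> (\<forall>i\<in>{S<..S + j}. x i = js n) \<and> x (Suc (S + j)) = b"
    have run: "x i = js n" if "i \<in> {S..S + j}" for i
      using h xS that by (cases "i = S") auto
    have "jumpB x (Suc n) = Suc (S + j)"
    proof (rule jumpB_Suc_eqI)
      show "jumpB x n < Suc (S + j)" using BS by simp
      show "x (Suc (S + j)) \<noteq> x (Suc (S + j) - 1)" using h run[of "S + j"] by simp
      show "x k = x (k - 1)" if "jumpB x n < k" "k < Suc (S + j)" for k
        using that run[of k] run[of "k - 1"] BS by force
    qed
    then show "jumpJ x (Suc n) = b \<and> sojT x (Suc n) = Suc j"
      using BS h unfolding jumpJ_def sojT_def by simp
  qed
qed

section \<open>Probabilities of prefix events\<close>

definition words :: "nat \<Rightarrow> (nat \<Rightarrow> letter) set" where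
  "words m = {..m} \<rightarrow>\<^sub>E UNIV"

lemma finite_words: "finite (words m)"
  unfolding words_def by (rule finite_PiE) auto

context
  fixes M :: "'w measure" and X :: "nat \<Rightarrow> 'w \<Rightarrow> letter"
  assumes [measurable]: "\<And>i. X i \<in> measurable M (count_space UNIV)"
begin

lemma measurable_jumpB [measurable]: "(\<lambda>\<omega>. jumpB (\<lambda>i. X i \<omega>) n) \<in> measurable M (count_space UNIV)"
  by (induction n) (auto simp: jumpB.simps(2))

lemma measurable_runlen [measurable]: "(\<lambda>\<omega>. runlen (\<lambda>i. X i \<omega>) n) \<in> measurable M (count_space UNIV)"
proof (induction n)
  case (Suc n)
  note [measurable] = Suc.IH
  show ?case by simp measurable
qed simp

lemma measurable_jumpJ [measurable]: "(\<lambda>\<omega>. jumpJ (\<lambda>i. X i \<omega>) n) \<in> measurable M (count_space UNIV)"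
  unfolding jumpJ_def by (rule measurable_compose_countable[where f = "\<lambda>i \<omega>. X i \<omega>"]) auto

lemma measurable_sojT [measurable]: "(\<lambda>\<omega>. sojT (\<lambda>i. X i \<omega>) n) \<in> measurable M (count_space UNIV)"
  unfolding sojT_def by measurable

end

locale double_comb_vlmc =
  fixes M :: "'w measure" and X :: "nat \<Rightarrow> 'w \<Rightarrow> letter" and q :: "letter \<Rightarrow> nat \<Rightarrow> letter pmf"
  assumes vlmc: "vlmc_double_comb M X q"
begin

sublocale prob_space M
  using vlmc unfolding vlmc_double_comb_def by simp

lemma measurable_X [measurable]: "X i \<in> measurable M (count_space UNIV)"
  using vlmc unfolding vlmc_double_comb_def by simp

abbreviation path_set :: "((nat \<Rightarrow> letter) \<Rightarrow> bool) \<Rightarrow> 'w set" where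
  "path_set E \<equiv> {\<omega> \<in> space M. E (\<lambda>i. X i \<omega>)}"

abbreviation cylinder :: "nat \<Rightarrow> (nat \<Rightarrow> letter) \<Rightarrow> 'w set" where
  "cylinder m w \<equiv> path_set (\<lambda>x. \<forall>i\<le>m. x i = w i)"

lemma measure_cylinder_Suc:
  "measure M (cylinder (Suc n) w) = measure M (cylinder n w) * pmf (q (w n) (runlen w n)) (w (Suc n))"
  using vlmc unfolding vlmc_double_comb_def by blast

lemma path_set_eq_UN_cylinders:
  assumes "depends_on_prefix m E"
  shows "path_set E = (\<Union>w\<in>words m \<inter> Collect E. cylinder m w)"
proof (intro equalityI subsetI)
  fix \<omega> assume \<omega>: "\<omega> \<in> path_set E"
  define w where "w = restrict (\<lambda>i. X i \<omega>) {..m}"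
  have "w \<in> words m" unfolding w_def words_def by simp
  moreover have "E w"
    using \<omega> assms unfolding depends_on_prefix_def w_def by (metis (no_types, lifting) atMost_iff mem_Collect_eq restrict_apply')
  moreover have "\<omega> \<in> cylinder m w"
    using \<omega> unfolding w_def by simp
  ultimately show "\<omega> \<in> (\<Union>w\<in>words m \<inter> Collect E. cylinder m w)" by blast
next
  fix \<omega> assume "\<omega> \<in> (\<Union>w\<in>words m \<inter> Collect E. cylinder m w)"
  then obtain w where "E w" "\<omega> \<in> cylinder m w" by blast
  then show "\<omega> \<in> path_set E"
    using assms unfolding depends_on_prefix_def by (metis (mono_tags, lifting) mem_Collect_eq)
qed

lemma sets_path_set: "depends_on_prefix m E \<Longrightarrow> path_set E \<in> sets M"
  unfolding path_set_eq_UN_cylinders using finite_words by (intro sets.finite_UN) auto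

lemma measure_path_set_Int:
  assumes E: "depends_on_prefix m E" and A: "A \<in> sets M"
  shows "measure M (path_set E \<inter> A) = (\<Sum>w\<in>words m \<inter> Collect E. measure M (cylinder m w \<inter> A))"
proof -
  have "path_set E \<inter> A = (\<Union>w\<in>words m \<inter> Collect E. cylinder m w \<inter> A)"
    unfolding path_set_eq_UN_cylinders[OF E] by blast
  also have "measure M \<dots> = (\<Sum>w\<in>words m \<inter> Collect E. measure M (cylinder m w \<inter> A))"
  proof (rule measure_finite_Union)
    show "disjoint_family_on (\<lambda>w. cylinder m w \<inter> A) (words m \<inter> Collect E)"
      unfolding disjoint_family_on_def
    proof (intro ballI impI)
      fix w w' assume "w \<in> words m \<inter> Collect E" "w' \<in> words m \<inter> Collect E" "w \<noteq> w'"
      then obtain i where "i \<le> m" "w i \<noteq> w' i"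
        unfolding words_def by (metis IntD1 PiE_ext atMost_iff)
      then show "cylinder m w \<inter> A \<inter> (cylinder m w' \<inter> A) = {}" by auto
    qed
  qed (use finite_words A in \<open>auto simp: emeasure_eq_measure\<close>)
  finally show ?thesis .
qed

lemma measure_path_set_Suc:
  assumes E: "depends_on_prefix m E" and end_state: "\<And>w. E w \<Longrightarrow> w m = a \<and> runlen w m = r"
  shows "measure M (path_set (\<lambda>x. E x \<and> x (Suc m) = c)) = measure M (path_set E) * pmf (q a r) c"
proof -
  let ?A = "{\<omega> \<in> space M. X (Suc m) \<omega> = c}"
  have "measure M (path_set (\<lambda>x. E x \<and> x (Suc m) = c)) = measure M (path_set E \<inter> ?A)"
    by (rule arg_cong[where f = "measure M"]) blast
  also have "\<dots> = (\<Sum>w\<in>words m \<inter> Collect E. measure M (cylinder m w \<inter> ?A))"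
    by (rule measure_path_set_Int[OF E]) measurable
  also have "\<dots> = (\<Sum>w\<in>words m \<inter> Collect E. measure M (cylinder m w) * pmf (q a r) c)"
  proof (rule sum.cong[OF refl])
    fix w assume w: "w \<in> words m \<inter> Collect E"
    let ?w' = "w(Suc m := c)"
    have "cylinder m w \<inter> ?A = cylinder (Suc m) ?w'"
      by (auto simp: le_Suc_eq)
    moreover have "cylinder m ?w' = cylinder m w" by auto
    moreover have "runlen ?w' m = runlen w m" by (rule runlen_cong) simp
    ultimately show "measure M (cylinder m w \<inter> ?A) = measure M (cylinder m w) * pmf (q a r) c"
      using measure_cylinder_Suc[of m ?w'] end_state[of w] w by simp
  qed
  also have "\<dots> = measure M (path_set E \<inter> space M) * pmf (q a r) c"
    using measure_path_set_Int[OF E sets.top] by (simp add: sum_distrib_right Int_absorb2)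
  finally show ?thesis by (simp add: Int_absorb2)
qed

lemma measure_path_set_run:
  assumes E: "depends_on_prefix m E" and end_state: "\<And>w. E w \<Longrightarrow> w m = a \<and> runlen w m = r"
  shows "measure M (path_set (\<lambda>x. E x \<and> (\<forall>i\<in>{m<..m + j}. x i = a)))
       = measure M (path_set E) * (\<Prod>i\<in>{r..<r + j}. pmf (q a i) a)"
proof (induction j)
  case (Suc j)
  let ?Ej = "\<lambda>x. E x \<and> (\<forall>i\<in>{m<..m + j}. x i = a)"
  have "path_set (\<lambda>x. E x \<and> (\<forall>i\<in>{m<..m + Suc j}. x i = a)) = path_set (\<lambda>x. ?Ej x \<and> x (Suc (m + j)) = a)"
    by (auto simp: le_Suc_eq)
  also have "measure M \<dots> = measure M (path_set ?Ej) * pmf (q a (r + j)) a"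
    using end_state runlen_run_extension
    by (intro measure_path_set_Suc depends_on_prefix_run[OF E]) blast
  finally show ?case
    using Suc.IH by simp
qed simp

lemma measure_path_set_run_then:
  assumes E: "depends_on_prefix m E" and end_state: "\<And>w. E w \<Longrightarrow> w m = a \<and> runlen w m = r"
  shows "measure M (path_set (\<lambda>x. E x \<and> (\<forall>i\<in>{m<..m + j}. x i = a) \<and> x (Suc (m + j)) = c))
       = measure M (path_set E) * (\<Prod>i\<in>{r..<r + j}. pmf (q a i) a) * pmf (q a (r + j)) c"
proof -
  have "measure M (path_set (\<lambda>x. (E x \<and> (\<forall>i\<in>{m<..m + j}. x i = a)) \<and> x (Suc (m + j)) = c))
      = measure M (path_set (\<lambda>x. E x \<and> (\<forall>i\<in>{m<..m + j}. x i = a))) * pmf (q a (r + j)) c"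
    using end_state runlen_run_extension
    by (intro measure_path_set_Suc depends_on_prefix_run[OF E]) blast
  then show ?thesis
    using measure_path_set_run[OF E end_state] by (simp add: conj_assoc)
qed

section \<open>Almost surely infinitely many jumps\<close>

lemma measure_run_le:
  "measure M (path_set (\<lambda>x. x s = a \<and> runlen x s = 1 \<and> (\<forall>i\<in>{s<..s + L}. x i = a)))
    \<le> (\<Prod>k\<in>{1..L}. pmf (q a k) a)"
proof -
  have "measure M (path_set (\<lambda>x. x s = a \<and> runlen x s = 1 \<and> (\<forall>i\<in>{s<..s + L}. x i = a)))
      = measure M (path_set (\<lambda>x. x s = a \<and> runlen x s = 1)) * (\<Prod>k\<in>{1..<1 + L}. pmf (q a k) a)"
    using measure_path_set_run[OF depends_on_prefix_end_state, where j = L] by (simp add: conj_assoc)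
  also have "\<dots> \<le> (\<Prod>k\<in>{1..<1 + L}. pmf (q a k) a)"
    by (intro mult_left_le_one_le prod_nonneg) auto
  finally show ?thesis
    by (simp add: atLeastLessThanSuc_atLeastAtMost)
qed

lemma measure_no_jump_after_le:
  "measure M (path_set (\<lambda>x. \<forall>k>m. x k = x (k - 1)))
    \<le> real (Suc m) * (\<Sum>a\<in>UNIV. \<Prod>k\<in>{1..L}. pmf (q a k) a)"
proof -
  define A where "A p = path_set (\<lambda>x. x (fst p) = snd p \<and> runlen x (fst p) = 1
      \<and> (\<forall>i\<in>{fst p<..fst p + L}. x i = snd p))" for p
  have sets_A: "A p \<in> sets M" for p
    unfolding A_def by measurable
  have "path_set (\<lambda>x. \<forall>k>m. x k = x (k - 1)) \<subseteq> (\<Union>p\<in>{..m} \<times> UNIV. A p)"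
  proof
    fix \<omega> assume \<omega>: "\<omega> \<in> path_set (\<lambda>x. \<forall>k>m. x k = x (k - 1))"
    then have "\<forall>k>m. X k \<omega> = X (k - 1) \<omega>" by simp
    then obtain s a where "s \<le> m" "runlen (\<lambda>i. X i \<omega>) s = 1" "\<forall>i\<ge>s. X i \<omega> = a"
      by (rule run_start_of_constant_tail)
    with \<omega> have "(s, a) \<in> {..m} \<times> UNIV" "\<omega> \<in> A (s, a)"
      unfolding A_def by auto
    then show "\<omega> \<in> (\<Union>p\<in>{..m} \<times> UNIV. A p)" by blast
  qed
  then have "measure M (path_set (\<lambda>x. \<forall>k>m. x k = x (k - 1))) \<le> measure M (\<Union>p\<in>{..m} \<times> UNIV. A p)"
    using sets_A by (intro finite_measure_mono) auto
  also have "\<dots> \<le> (\<Sum>p\<in>{..m} \<times> UNIV. measure M (A p))"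
    using sets_A by (intro finite_measure_subadditive_finite) auto
  also have "\<dots> \<le> (\<Sum>p\<in>{..m} \<times> UNIV. \<Prod>k\<in>{1..L}. pmf (q (snd p) k) (snd p))"
    unfolding A_def by (intro sum_mono measure_run_le)
  also have "\<dots> = (\<Sum>s\<le>m. \<Sum>a\<in>UNIV. \<Prod>k\<in>{1..L}. pmf (q a k) a)"
    by (subst sum.cartesian_product) (simp add: split_def)
  also have "\<dots> = real (Suc m) * (\<Sum>a\<in>UNIV. \<Prod>k\<in>{1..L}. pmf (q a k) a)"
    by simp
  finally show ?thesis .
qed

lemma AE_infinite_jumps:
  assumes lim: "\<And>a. (\<lambda>n. \<Prod>k\<in>{1..n}. pmf (q a k) a) \<longlonglongrightarrow> 0"
  shows "AE \<omega> in M. infinite_jumps (\<lambda>i. X i \<omega>)"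
proof -
  have "AE \<omega> in M. \<exists>k>m. X k \<omega> \<noteq> X (k - 1) \<omega>" for m
  proof (rule AE_I')
    let ?N = "path_set (\<lambda>x. \<forall>k>m. x k = x (k - 1))"
    have "(\<lambda>L. real (Suc m) * (\<Sum>a\<in>UNIV. \<Prod>k\<in>{1..L}. pmf (q a k) a)) \<longlonglongrightarrow> real (Suc m) * 0"
      by (intro tendsto_mult_left tendsto_null_sum lim)
    then have "measure M ?N \<le> real (Suc m) * 0"
      by (rule LIMSEQ_le_const) (use measure_no_jump_after_le in blast)
    moreover have "?N \<in> sets M" by measurable
    ultimately show "?N \<in> null_sets M"
      by (simp add: emeasure_eq_measure null_setsI measure_le_0_iff)
  qed auto
  then show ?thesis
    unfolding infinite_jumps_def by (simp add: AE_all_countable)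
qed

section \<open>The Markov renewal property\<close>

lemma measure_path_set_AE_cong:
  assumes "AE \<omega> in M. infinite_jumps (\<lambda>i. X i \<omega>)"
    and "\<And>x. infinite_jumps x \<Longrightarrow> P x \<longleftrightarrow> Q x"
    and "path_set P \<in> sets M" "path_set Q \<in> sets M"
  shows "measure M (path_set P) = measure M (path_set Q)"
  using assms(1) by (intro measure_eq_AE assms(3,4)) (auto simp: assms(2))

lemma measure_impossible_next_jump:
  assumes jumps: "AE \<omega> in M. infinite_jumps (\<lambda>i. X i \<omega>)" and "k = 0 \<or> b = js n"
  shows "measure M (path_set (\<lambda>x. jump_record n js ts x \<and> jumpJ x (Suc n) = b \<and> sojT x (Suc n) = k)) = 0"
proof -
  have "measure M (path_set (\<lambda>x. jump_record n js ts x \<and> jumpJ x (Suc n) = b \<and> sojT x (Suc n) = k))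
      = measure M (path_set (\<lambda>_. False))"
  proof (rule measure_path_set_AE_cong[OF jumps])
    fix x assume x: "infinite_jumps x"
    show "jump_record n js ts x \<and> jumpJ x (Suc n) = b \<and> sojT x (Suc n) = k \<longleftrightarrow> False"
    proof (cases k)
      case (Suc j)
      with assms(2) next_jump_iff[OF x _ refl, where b = b and j = j] show ?thesis by auto
    qed (use sojT_Suc_pos[OF x, of n] in auto)
  qed (simp_all add: jump_record_def)
  then show ?thesis by simp
qed

lemma measure_jump_record_next_jump:
  assumes jumps: "AE \<omega> in M. infinite_jumps (\<lambda>i. X i \<omega>)" and b: "b \<noteq> js n"
  shows "measure M (path_set (\<lambda>x. jump_record n js ts x \<and> jumpJ x (Suc n) = b \<and> sojT x (Suc n) = Suc j))
       = measure M (path_set (jump_record n js ts))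
         * (\<Prod>i\<in>{1..j}. pmf (q (js n) i) (js n)) * pmf (q (js n) (Suc j)) b"
proof -
  define S where "S = (\<Sum>l\<le>n. ts l)"
  obtain E where E: "depends_on_prefix S E"
    and record_iff: "\<And>x. infinite_jumps x \<Longrightarrow> jump_record n js ts x \<longleftrightarrow> E x"
    and end_state: "\<And>w. E w \<Longrightarrow> w S = js n \<and> runlen w S = 1"
    using jump_record_prefix_event unfolding S_def by metis
  have run_then: "depends_on_prefix (Suc (S + j))
      (\<lambda>x. E x \<and> (\<forall>i\<in>{S<..S + j}. x i = js n) \<and> x (Suc (S + j)) = b)"
    using depends_on_prefix_Suc[OF depends_on_prefix_run[OF E]] by (simp add: conj_assoc)
  have "measure M (path_set (\<lambda>x. jump_record n js ts x \<and> jumpJ x (Suc n) = b \<and> sojT x (Suc n) = Suc j))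
      = measure M (path_set (\<lambda>x. E x \<and> (\<forall>i\<in>{S<..S + j}. x i = js n) \<and> x (Suc (S + j)) = b))"
  proof (rule measure_path_set_AE_cong[OF jumps])
    fix x assume x: "infinite_jumps x"
    have "jump_record n js ts x \<Longrightarrow> jumpJ x (Suc n) = b \<and> sojT x (Suc n) = Suc j
        \<longleftrightarrow> b \<noteq> js n \<and> (\<forall>i\<in>{S<..S + j}. x i = js n) \<and> x (Suc (S + j)) = b"
      by (rule next_jump_iff[OF x _ S_def])
    then show "jump_record n js ts x \<and> jumpJ x (Suc n) = b \<and> sojT x (Suc n) = Suc j
        \<longleftrightarrow> E x \<and> (\<forall>i\<in>{S<..S + j}. x i = js n) \<and> x (Suc (S + j)) = b"
      using record_iff[OF x] b by argo
  qed (simp add: jump_record_def, rule sets_path_set[OF run_then])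
  also have "\<dots> = measure M (path_set E) * (\<Prod>i\<in>{1..<1 + j}. pmf (q (js n) i) (js n)) * pmf (q (js n) (1 + j)) b"
    by (rule measure_path_set_run_then[OF E end_state])
  also have "measure M (path_set E) = measure M (path_set (jump_record n js ts))"
    by (rule measure_path_set_AE_cong[OF jumps record_iff _ sets_path_set[OF E], symmetric])
      (unfold jump_record_def, measurable)
  finally show ?thesis
    by (simp add: atLeastLessThanSuc_atLeastAtMost)
qed

lemma measure_jump_record_Suc:
  assumes jumps: "AE \<omega> in M. infinite_jumps (\<lambda>i. X i \<omega>)"
  shows "measure M (path_set (\<lambda>x. jump_record n js ts x \<and> jumpJ x (Suc n) = b \<and> sojT x (Suc n) = k))
       = measure M (path_set (jump_record n js ts)) * comb_kernel q (js n) b k"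
proof (cases "k = 0 \<or> b = js n")
  case True
  then show ?thesis
    using measure_impossible_next_jump[OF jumps] by (auto simp: comb_kernel_def)
next
  case False
  then obtain j where "k = Suc j" "b \<noteq> js n"
    by (cases k) auto
  then show ?thesis
    using measure_jump_record_next_jump[OF jumps] by (simp add: comb_kernel_def)
qed

end

theorem mainTheorem1:
  fixes M :: "'w measure" and X :: "nat \<Rightarrow> 'w \<Rightarrow> letter" and q :: "letter \<Rightarrow> nat \<Rightarrow> letter pmf"
  assumes vlmc: "vlmc_double_comb M X q"
    and lim: "\<And>a. (\<lambda>n. \<Prod>k\<in>{1..n}. pmf (q a k) a) \<longlonglongrightarrow> 0"
  shows "(AE \<omega> in M. \<forall>n. \<exists>k. k > jumpB (\<lambda>i. X i \<omega>) n \<and> X k \<omega> \<noteq> X (k - 1) \<omega>)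
    \<and> markov_renewal_chain M (\<lambda>n \<omega>. jumpJ (\<lambda>i. X i \<omega>) n) (\<lambda>n \<omega>. sojT (\<lambda>i. X i \<omega>) n) (comb_kernel q)
    \<and> semi_markov_chain_of M (\<lambda>n \<omega>. jumpJ (\<lambda>i. X i \<omega>) n) (\<lambda>n \<omega>. sojT (\<lambda>i. X i \<omega>) n) X"
proof -
  interpret double_comb_vlmc M X q
    using vlmc by unfold_locales
  have jumps: "AE \<omega> in M. infinite_jumps (\<lambda>i. X i \<omega>)"
    using lim by (rule AE_infinite_jumps)
  have "AE \<omega> in M. \<forall>n. \<exists>k. k > jumpB (\<lambda>i. X i \<omega>) n \<and> X k \<omega> \<noteq> X (k - 1) \<omega>"
    using jumps by eventually_elim (auto simp: infinite_jumps_def)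
  moreover have "markov_renewal_chain M (\<lambda>n \<omega>. jumpJ (\<lambda>i. X i \<omega>) n) (\<lambda>n \<omega>. sojT (\<lambda>i. X i \<omega>) n) (comb_kernel q)"
    unfolding markov_renewal_chain_def
    using measure_jump_record_Suc[OF jumps] by (simp add: comb_kernel_def jump_record_def)
  moreover have "semi_markov_chain_of M (\<lambda>n \<omega>. jumpJ (\<lambda>i. X i \<omega>) n) (\<lambda>n \<omega>. sojT (\<lambda>i. X i \<omega>) n) X"
    unfolding semi_markov_chain_of_def
    using jumps
  proof eventually_elim
    case (elim \<omega>)
    then show ?case
      using constant_between_jumps[OF elim] by (simp add: sum_sojT_eq_jumpB del: sum.atMost_Suc)
  qed
  ultimately show ?thesis by blast
qed

end
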